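(* Let $X_1,\ldots,X_n$ be $\{0,1\}$-valued random variables satisfying negative regression. Let $f:\{0,1\}^n \to \mathbb{R}$ be $1$-Lipschitz, and let $\mu = \mathbb{E}[f(X_1,\ldots,X_n)]$. Then for every $t>0$, $$\Pr[f(X_1,\ldots,X_n) \ge \mu + t] \le e^{-t^2/(2n)}, \qquad \Pr[f(X_1,\ldots,X_n) \le \mu - t] \le e^{-t^2/(2n)}.$$ If moreover $f$ is monotone (non-decreasing in each coordinate), both bounds improve to $e^{-2t^2/n}$.
   Context: For $S\subseteq[n]$, $X_S\in\{0,1\}^S$ denotes the tuple $(X_i)_{i\in S}$. The variables $X_1,\ldots,X_n$ satisfy negative regression if for all disjoint $I,J\subseteq[n]$, every non-decreasing function $g:\{0,1\}^I\to\mathbb{R}$, and all $a\le b$ in $\{0,1\}^J$ (coordinatewise) such that $\Pr[X_J=a]>0$ and $\Pr[X_J=b]>0$, we have $\mathbb{E}[g(X_I)\mid X_J=a]\ge \mathbb{E}[g(X_I)\mid X_J=b]$. A function $f:\{0,1\}^n\to\mathbb{R}$ is $1$-Lipschitz if changing any single coordinate of its argument changes its value by at most $1$ in absolute value. *)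

theory Defs
  imports "HOL-Probability.Probability"
begin

text \<open>The joint law of (X_1,...,X_n) is a pmf on bool lists of length n
  (index i < n stands for X_(i+1); True = 1, False = 0).\<close>

definition proj :: "nat set \<Rightarrow> bool list \<Rightarrow> (nat \<Rightarrow> bool)" where
  "proj S xs = (\<lambda>i. if i \<in> S then xs ! i else False)"

text \<open>The set {0,1}^S, encoded as functions that are False outside S.\<close>
definition assignments :: "nat set \<Rightarrow> (nat \<Rightarrow> bool) set" where
  "assignments S = {x. \<forall>i. i \<notin> S \<longrightarrow> x i = False}"

definition neg_regression :: "nat \<Rightarrow> bool list pmf \<Rightarrow> bool" where
  "neg_regression n p \<longleftrightarrow>
    (\<forall>I J (g :: (nat \<Rightarrow> bool) \<Rightarrow> real) a b.
       I \<subseteq> {..<n} \<longrightarrow> J \<subseteq> {..<n} \<longrightarrow> I \<inter> J = {} \<longrightarrow>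
       mono_on (assignments I) g \<longrightarrow>
       a \<in> assignments J \<longrightarrow> b \<in> assignments J \<longrightarrow> a \<le> b \<longrightarrow>
       measure_pmf.prob p {xs. proj J xs = a} > 0 \<longrightarrow>
       measure_pmf.prob p {xs. proj J xs = b} > 0 \<longrightarrow>
       measure_pmf.expectation (cond_pmf p {xs. proj J xs = a}) (\<lambda>xs. g (proj I xs))
         \<ge> measure_pmf.expectation (cond_pmf p {xs. proj J xs = b}) (\<lambda>xs. g (proj I xs)))"

definition lipschitz1 :: "nat \<Rightarrow> (bool list \<Rightarrow> real) \<Rightarrow> bool" where
  "lipschitz1 n f \<longleftrightarrow>
    (\<forall>xs i b. length xs = n \<longrightarrow> i < n \<longrightarrow> \<bar>f xs - f (xs[i := b])\<bar> \<le> 1)"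

definition monotone_fun :: "nat \<Rightarrow> (bool list \<Rightarrow> real) \<Rightarrow> bool" where
  "monotone_fun n f \<longleftrightarrow>
    (\<forall>xs ys. length xs = n \<longrightarrow> length ys = n \<longrightarrow> list_all2 (\<le>) xs ys \<longrightarrow> f xs \<le> f ys)"

end

theory Submission
  imports Defs
begin

text \<open>
  We bound the moment generating function by revealing one coordinate at a time, as in the
  martingale proof of McDiarmid's inequality, by induction on the number of non-constant
  coordinates. Conditioning on a coordinate preserves negative regression. We reveal a
  non-constant coordinate \<open>i\<close> for which \<open>X\<^sub>i = 1\<close> does not lower the expected number \<open>S\<close> of ones;
  it exists because the covariances \<open>Cov(X\<^sub>i, S)\<close> add up to \<open>Var S \<ge> 0\<close>. For this \<open>i\<close>,
  negative regression applied to the non-decreasing functions \<open>\<plusminus>f + S\<close> of the other coordinates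
  shows that the conditional means of \<open>f\<close> given \<open>X\<^sub>i = 1\<close> and \<open>X\<^sub>i = 0\<close> differ by at most 2,
  and by at most 1 if \<open>f\<close> is monotone. Hoeffding's lemma then costs a factor
  \<open>exp (\<lambda>\<^sup>2 c\<^sup>2 / 8)\<close> per coordinate, and Chernoff's bound finishes.
\<close>

section \<open>Conditioning finite distributions\<close>

lemma expectation_finite_pmf:
  fixes h :: "'a \<Rightarrow> real"
  assumes "finite (set_pmf p)"
  shows "measure_pmf.expectation p h = (\<Sum>x\<in>set_pmf p. h x * pmf p x)"
  using assms by (rule integral_measure_pmf_real) auto

lemma expectation_cong_pmf:
  "(\<And>x. x \<in> set_pmf p \<Longrightarrow> f x = g x) \<Longrightarrow>
     measure_pmf.expectation p f = measure_pmf.expectation p g"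
  by (rule integral_cong_AE) (auto simp: AE_measure_pmf_iff)

lemma abs_expectation_diff_le:
  fixes f g :: "'a \<Rightarrow> real"
  assumes fin: "finite (set_pmf p)" and bound: "\<And>x. x \<in> set_pmf p \<Longrightarrow> \<bar>f x - g x\<bar> \<le> c"
  shows "\<bar>measure_pmf.expectation p f - measure_pmf.expectation p g\<bar> \<le> c"
proof -
  have lower: "- c \<le> f x - g x" and upper: "f x - g x \<le> c" if "x \<in> set_pmf p" for x
    using bound[OF that] by (simp_all add: abs_le_iff)
  have "- c \<le> measure_pmf.expectation p (\<lambda>x. f x - g x)"
    using fin lower by (intro measure_pmf.integral_ge_const)
      (auto simp: AE_measure_pmf_iff integrable_measure_pmf_finite)
  moreover have "measure_pmf.expectation p (\<lambda>x. f x - g x) \<le> c"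
    using fin upper by (intro measure_pmf.integral_le_const)
      (auto simp: AE_measure_pmf_iff integrable_measure_pmf_finite)
  moreover have "measure_pmf.expectation p (\<lambda>x. f x - g x)
      = measure_pmf.expectation p f - measure_pmf.expectation p g"
    using fin by (simp add: integrable_measure_pmf_finite)
  ultimately show ?thesis by linarith
qed

lemma measure_pmf_prob_Compl:
  "measure_pmf.prob p (- A) = 1 - measure_pmf.prob p A"
  using measure_pmf.prob_compl[of A p] by (simp add: Compl_eq_Diff_UNIV)

lemma prob_mult_expectation_cond_pmf:
  fixes h :: "'a \<Rightarrow> real"
  assumes fin: "finite (set_pmf p)" and ne: "set_pmf p \<inter> A \<noteq> {}"
  shows "measure_pmf.prob p A * measure_pmf.expectation (cond_pmf p A) h
           = measure_pmf.expectation p (\<lambda>x. indicator A x * h x)"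
proof -
  have pos: "measure_pmf.prob p A > 0" using ne by (auto intro: measure_pmf_posI)
  have "measure_pmf.expectation (cond_pmf p A) h
      = (\<Sum>x\<in>set_pmf p \<inter> A. h x * (pmf p x / measure_pmf.prob p A))"
    using fin ne by (simp add: expectation_finite_pmf pmf_cond[OF ne])
  then have "measure_pmf.prob p A * measure_pmf.expectation (cond_pmf p A) h
      = (\<Sum>x\<in>set_pmf p \<inter> A. h x * pmf p x)"
    using pos by (simp add: sum_distrib_left)
  also have "\<dots> = measure_pmf.expectation p (\<lambda>x. indicator A x * h x)"
    using fin by (auto simp: expectation_finite_pmf sum.inter_restrict indicator_def intro!: sum.cong)
  finally show ?thesis .
qed

lemma expectation_split_cond_pmf:
  fixes h :: "'a \<Rightarrow> real"
  assumes fin: "finite (set_pmf p)"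
    and "set_pmf p \<inter> A \<noteq> {}" and "set_pmf p \<inter> - A \<noteq> {}"
  shows "measure_pmf.expectation p h
           = measure_pmf.prob p A * measure_pmf.expectation (cond_pmf p A) h
           + measure_pmf.prob p (- A) * measure_pmf.expectation (cond_pmf p (- A)) h"
proof -
  have "h x = indicator A x * h x + indicator (- A) x * h x" for x
    by (simp add: indicator_def)
  then have "measure_pmf.expectation p h
      = measure_pmf.expectation p (\<lambda>x. indicator A x * h x + indicator (- A) x * h x)"
    by simp
  also have "\<dots> = measure_pmf.expectation p (\<lambda>x. indicator A x * h x)
                + measure_pmf.expectation p (\<lambda>x. indicator (- A) x * h x)"
    using fin by (simp add: integrable_measure_pmf_finite)
  finally show ?thesis
    using assms by (simp add: prob_mult_expectation_cond_pmf)
qed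

lemma covariance_indicator_cond_pmf:
  fixes h :: "'a \<Rightarrow> real"
  assumes fin: "finite (set_pmf p)"
    and neA: "set_pmf p \<inter> A \<noteq> {}" and neC: "set_pmf p \<inter> - A \<noteq> {}"
  shows "measure_pmf.expectation p (\<lambda>x. indicator A x * h x)
           - measure_pmf.prob p A * measure_pmf.expectation p h
         = measure_pmf.prob p A * measure_pmf.prob p (- A)
           * (measure_pmf.expectation (cond_pmf p A) h - measure_pmf.expectation (cond_pmf p (- A)) h)"
  unfolding expectation_split_cond_pmf[OF assms, of h]
    prob_mult_expectation_cond_pmf[OF fin neA, symmetric] measure_pmf_prob_Compl
  by (simp add: algebra_simps)

lemma cond_pmf_cond_pmf:
  assumes fin: "finite (set_pmf p)" and ne: "set_pmf p \<inter> (A \<inter> B) \<noteq> {}"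
  shows "cond_pmf (cond_pmf p A) B = cond_pmf p (A \<inter> B)"
proof (rule pmf_eqI)
  fix x
  have neA: "set_pmf p \<inter> A \<noteq> {}" using ne by auto
  then have neB: "set_pmf (cond_pmf p A) \<inter> B \<noteq> {}" using ne by auto
  have pos: "measure_pmf.prob p A > 0" using neA by (auto intro: measure_pmf_posI)
  have "measure_pmf.prob p A * measure_pmf.prob (cond_pmf p A) B = measure_pmf.prob p (A \<inter> B)"
    using prob_mult_expectation_cond_pmf[OF fin neA, of "indicator B"]
    by (simp add: indicator_inter_arith[symmetric])
  then have "measure_pmf.prob (cond_pmf p A) B = measure_pmf.prob p (A \<inter> B) / measure_pmf.prob p A"
    using pos by (simp add: eq_divide_eq mult.commute)
  then show "pmf (cond_pmf (cond_pmf p A) B) x = pmf (cond_pmf p (A \<inter> B)) x"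
    using pos by (simp add: pmf_cond[OF neB] pmf_cond[OF neA] pmf_cond[OF ne])
qed

section \<open>Conditioning on a coordinate preserves negative regression\<close>

lemma finite_set_pmf_bool_lists:
  "set_pmf p \<subseteq> {xs :: bool list. length xs = n} \<Longrightarrow> finite (set_pmf p)"
  using finite_lists_length_eq[of "UNIV :: bool set" n] finite_subset by auto

lemma coord_Int_proj_eq:
  assumes "a \<in> assignments J" and "i \<in> J \<Longrightarrow> a i = c"
  shows "{xs. xs ! i = c} \<inter> {xs. proj J xs = a} = {xs. proj (insert i J) xs = a(i := c)}"
  using assms by (auto simp: proj_def assignments_def fun_eq_iff split: if_splits)

lemma cond_pmf_coord_cond_proj:
  assumes fin: "finite (set_pmf p)" and ne: "set_pmf p \<inter> {xs. xs ! i = c} \<noteq> {}"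
    and a: "a \<in> assignments J"
    and pos: "0 < measure_pmf.prob (cond_pmf p {xs. xs ! i = c}) {xs. proj J xs = a}"
  shows "0 < measure_pmf.prob p {xs. proj (insert i J) xs = a(i := c)}"
    and "cond_pmf (cond_pmf p {xs. xs ! i = c}) {xs. proj J xs = a}
           = cond_pmf p {xs. proj (insert i J) xs = a(i := c)}"
    and "\<And>xs. xs \<in> set_pmf (cond_pmf p {xs. proj (insert i J) xs = a(i := c)}) \<Longrightarrow> xs ! i = c"
proof -
  let ?F = "{xs :: bool list. xs ! i = c}" and ?E = "{xs. proj (insert i J) xs = a(i := c)}"
  from pos obtain x where x: "x \<in> set_pmf p" "x ! i = c" "proj J x = a"
    using measure_pmf_zero_iff[of "cond_pmf p ?F" "{xs. proj J xs = a}"] ne by auto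
  then have "i \<in> J \<Longrightarrow> a i = c" by (auto simp: proj_def)
  then have eq: "?F \<inter> {xs. proj J xs = a} = ?E"
    by (rule coord_Int_proj_eq[OF a])
  have x': "x \<in> set_pmf p \<inter> ?E" using x eq by blast
  then show "0 < measure_pmf.prob p ?E"
    by (auto intro: measure_pmf_posI)
  show "cond_pmf (cond_pmf p ?F) {xs. proj J xs = a} = cond_pmf p ?E"
    using cond_pmf_cond_pmf[OF fin, of ?F "{xs. proj J xs = a}"] x' unfolding eq by blast
  show "xs ! i = c" if "xs \<in> set_pmf (cond_pmf p ?E)" for xs
    using that set_cond_pmf[of p ?E] x' eq by blast
qed

lemma neg_regression_cond_pmf:
  assumes sup: "set_pmf p \<subseteq> {xs. length xs = n}" and nr: "neg_regression n p" and i: "i < n"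
    and ne: "set_pmf p \<inter> {xs. xs ! i = c} \<noteq> {}"
  shows "neg_regression n (cond_pmf p {xs. xs ! i = c})"
  unfolding neg_regression_def
proof (intro allI impI)
  fix I J and g :: "(nat \<Rightarrow> bool) \<Rightarrow> real" and a b
  assume I: "I \<subseteq> {..<n}" and J: "J \<subseteq> {..<n}" and IJ: "I \<inter> J = {}"
    and mono: "mono_on (assignments I) g"
    and a: "a \<in> assignments J" and b: "b \<in> assignments J" and ab: "a \<le> b"
    and pa: "0 < measure_pmf.prob (cond_pmf p {xs. xs ! i = c}) {xs. proj J xs = a}"
    and pb: "0 < measure_pmf.prob (cond_pmf p {xs. xs ! i = c}) {xs. proj J xs = b}"
  define I' where "I' = I - {i}"
  define J' where "J' = insert i J"
  define g' where "g' = (\<lambda>z. g (\<lambda>j. if j = i \<and> i \<in> I then c else z j))"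
  note cond_a = cond_pmf_coord_cond_proj[OF finite_set_pmf_bool_lists[OF sup] ne a pa, folded J'_def]
  note cond_b = cond_pmf_coord_cond_proj[OF finite_set_pmf_bool_lists[OF sup] ne b pb, folded J'_def]
  \<comment> \<open>Given \<open>X_i = c\<close>, the value \<open>g (X_I)\<close> is a monotone function \<open>g'\<close> of the coordinates in \<open>I'\<close>,
    which are disjoint from \<open>J'\<close>.\<close>
  have g': "measure_pmf.expectation (cond_pmf p {xs. proj J' xs = a'(i := c)}) (\<lambda>xs. g (proj I xs))
      = measure_pmf.expectation (cond_pmf p {xs. proj J' xs = a'(i := c)}) (\<lambda>xs. g' (proj I' xs))"
    if "\<And>xs. xs \<in> set_pmf (cond_pmf p {xs. proj J' xs = a'(i := c)}) \<Longrightarrow> xs ! i = c" for a'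
    using that unfolding g'_def I'_def
    by (intro expectation_cong_pmf arg_cong[where f = g]) (auto simp: proj_def)
  have "measure_pmf.expectation (cond_pmf p {xs. proj J' xs = b(i := c)}) (\<lambda>xs. g' (proj I' xs))
      \<le> measure_pmf.expectation (cond_pmf p {xs. proj J' xs = a(i := c)}) (\<lambda>xs. g' (proj I' xs))"
  proof (rule nr[unfolded neg_regression_def, rule_format])
    show "I' \<subseteq> {..<n}" "J' \<subseteq> {..<n}" "I' \<inter> J' = {}"
      using I J IJ i by (auto simp: I'_def J'_def)
    show "mono_on (assignments I') g'"
    proof (rule mono_onI)
      fix z z' assume "z \<in> assignments I'" "z' \<in> assignments I'" "z \<le> z'"
      then show "g' z \<le> g' z'"
        unfolding g'_def
        by (intro mono_onD[OF mono]) (auto simp: assignments_def I'_def le_fun_def)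
    qed
    show "a(i := c) \<in> assignments J'" "b(i := c) \<in> assignments J'" "a(i := c) \<le> b(i := c)"
      using a b ab by (auto simp: assignments_def J'_def le_fun_def)
    show "0 < measure_pmf.prob p {xs. proj J' xs = a(i := c)}"
      "0 < measure_pmf.prob p {xs. proj J' xs = b(i := c)}"
      using cond_a(1) cond_b(1) .
  qed
  then show "measure_pmf.expectation (cond_pmf (cond_pmf p {xs. xs ! i = c}) {xs. proj J xs = b})
        (\<lambda>xs. g (proj I xs))
      \<le> measure_pmf.expectation (cond_pmf (cond_pmf p {xs. xs ! i = c}) {xs. proj J xs = a})
        (\<lambda>xs. g (proj I xs))"
    using g'[of a, OF cond_a(3)] g'[of b, OF cond_b(3)] unfolding cond_a(2) cond_b(2) by simp
qed

lemma neg_regression_cond_coord_le: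
  fixes g :: "(nat \<Rightarrow> bool) \<Rightarrow> real"
  assumes nr: "neg_regression n p" and i: "i < n"
    and ne1: "set_pmf p \<inter> {xs. xs ! i} \<noteq> {}" and ne0: "set_pmf p \<inter> {xs. \<not> xs ! i} \<noteq> {}"
    and g: "mono_on (assignments ({..<n} - {i})) g"
  shows "measure_pmf.expectation (cond_pmf p {xs. xs ! i}) (\<lambda>xs. g (proj ({..<n} - {i}) xs))
       \<le> measure_pmf.expectation (cond_pmf p {xs. \<not> xs ! i}) (\<lambda>xs. g (proj ({..<n} - {i}) xs))"
proof -
  have zero: "{xs. proj {i} xs = (\<lambda>_. False)} = {xs. \<not> xs ! i}"
    and one: "{xs. proj {i} xs = (\<lambda>j. j = i)} = {xs. xs ! i}"
    by (auto simp: proj_def fun_eq_iff)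
  have "measure_pmf.prob p {xs. proj {i} xs = (\<lambda>_. False)} > 0"
    "measure_pmf.prob p {xs. proj {i} xs = (\<lambda>j. j = i)} > 0"
    unfolding zero one using ne0 ne1 by (auto intro: measure_pmf_posI)
  moreover have "(\<lambda>_. False) \<in> assignments {i}" "(\<lambda>j. j = i) \<in> assignments {i}"
    "(\<lambda>_. False) \<le> (\<lambda>j. j = i)"
    by (auto simp: assignments_def le_fun_def)
  ultimately show ?thesis
    using nr[unfolded neg_regression_def, rule_format, of "{..<n} - {i}" "{i}" g "\<lambda>_. False" "\<lambda>j. j = i"] g i
    unfolding zero one by auto
qed

section \<open>Revealing one coordinate\<close>

lemma lipschitz1_abs_diff_le_hamming:
  assumes lip: "lipschitz1 n f" and "length xs = n" "length ys = n"
  shows "\<bar>f xs - f ys\<bar> \<le> real (card {j. j < n \<and> xs ! j \<noteq> ys ! j})"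
  using assms(2)
proof (induction "card {j. j < n \<and> xs ! j \<noteq> ys ! j}" arbitrary: xs)
  case 0
  then have "xs = ys"
    using \<open>length ys = n\<close> by (intro nth_equalityI) (auto simp: card_eq_0_iff)
  then show ?case by simp
next
  case (Suc m)
  then obtain j where j: "j < n" "xs ! j \<noteq> ys ! j"
    by (metis (mono_tags, lifting) card.empty empty_Collect_eq nat.distinct(1))
  define xs' where "xs' = xs[j := ys ! j]"
  have "{k. k < n \<and> xs' ! k \<noteq> ys ! k} = {k. k < n \<and> xs ! k \<noteq> ys ! k} - {j}"
    using j Suc.prems by (auto simp: xs'_def nth_list_update)
  then have "m = card {k. k < n \<and> xs' ! k \<noteq> ys ! k}"
    using Suc.hyps(2) j by simp
  then have "\<bar>f xs' - f ys\<bar> \<le> real m"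
    using Suc.hyps(1)[of xs'] Suc.prems by (simp add: xs'_def)
  moreover have "\<bar>f xs - f xs'\<bar> \<le> 1"
    using lip Suc.prems j unfolding lipschitz1_def xs'_def by blast
  ultimately show ?case
    unfolding Suc.hyps(2)[symmetric] by simp
qed

definition ones :: "nat set \<Rightarrow> (nat \<Rightarrow> bool) \<Rightarrow> real" where
  "ones I z = (\<Sum>j\<in>I. of_bool (z j))"

definition with_coord :: "nat \<Rightarrow> nat \<Rightarrow> bool \<Rightarrow> (nat \<Rightarrow> bool) \<Rightarrow> bool list" where
  "with_coord n i b z = map (\<lambda>j. if j = i then b else z j) [0..<n]"

lemma with_coord_proj:
  "length xs = n \<Longrightarrow> with_coord n i b (proj ({..<n} - {i}) xs) = xs[i := b]"
  by (intro nth_equalityI) (auto simp: with_coord_def proj_def nth_list_update)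

lemma ones_proj:
  assumes "length xs = n" "i < n"
  shows "ones ({..<n} - {i}) (proj ({..<n} - {i}) xs) = ones {..<n} ((!) xs) - of_bool (xs ! i)"
proof -
  have "ones {..<n} ((!) xs) = of_bool (xs ! i) + (\<Sum>j\<in>{..<n} - {i}. of_bool (xs ! j))"
    unfolding ones_def using assms by (simp add: sum.remove del: sum_of_bool_eq)
  moreover have "ones ({..<n} - {i}) (proj ({..<n} - {i}) xs) = (\<Sum>j\<in>{..<n} - {i}. of_bool (xs ! j))"
    unfolding ones_def by (rule sum.cong) (auto simp: proj_def)
  ultimately show ?thesis by simp
qed

lemma ones_diff_eq_card:
  assumes "finite I" "z \<le> z'"
  shows "ones I z' - ones I z = real (card {j\<in>I. z j \<noteq> z' j})"
proof -
  have "ones I z' - ones I z = (\<Sum>j\<in>I. of_bool (z j \<noteq> z' j))"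
    unfolding ones_def sum_subtractf[symmetric] using assms(2)
    by (intro sum.cong) (auto simp: le_fun_def)
  also have "\<dots> = real (card {j\<in>I. z j \<noteq> z' j})"
    using assms(1) by (simp add: of_bool_def sum.If_cases Int_def conj_commute)
  finally show ?thesis .
qed

lemma mono_on_lipschitz1_plus_ones:
  assumes lip: "lipschitz1 n f" and i: "i < n" and s: "\<bar>s\<bar> \<le> 1"
  shows "mono_on (assignments ({..<n} - {i}))
           (\<lambda>z. s * f (with_coord n i b z) + ones ({..<n} - {i}) z)"
proof (rule mono_onI)
  fix z z' assume z: "z \<in> assignments ({..<n} - {i})" "z' \<in> assignments ({..<n} - {i})" "z \<le> z'"
  let ?d = "real (card {j\<in>{..<n} - {i}. z j \<noteq> z' j})"
  have "\<bar>f (with_coord n i b z') - f (with_coord n i b z)\<bar>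
      \<le> real (card {j. j < n \<and> with_coord n i b z' ! j \<noteq> with_coord n i b z ! j})"
    by (rule lipschitz1_abs_diff_le_hamming[OF lip]) (simp_all add: with_coord_def)
  also have "{j. j < n \<and> with_coord n i b z' ! j \<noteq> with_coord n i b z ! j}
      = {j\<in>{..<n} - {i}. z j \<noteq> z' j}"
    by (auto simp: with_coord_def)
  finally have "\<bar>f (with_coord n i b z') - f (with_coord n i b z)\<bar> \<le> ?d" .
  then have "\<bar>s * (f (with_coord n i b z') - f (with_coord n i b z))\<bar> \<le> ?d"
    using s by (simp add: abs_mult mult_le_one order_trans[OF mult_right_mono])
  moreover have "ones ({..<n} - {i}) z' - ones ({..<n} - {i}) z = ?d"
    using ones_diff_eq_card[OF _ z(3)] by simp
  ultimately show "s * f (with_coord n i b z) + ones ({..<n} - {i}) z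
      \<le> s * f (with_coord n i b z') + ones ({..<n} - {i}) z'"
    by (simp add: abs_le_iff algebra_simps)
qed

lemma mono_on_monotone_fun_with_coord:
  assumes "monotone_fun n f"
  shows "mono_on A (\<lambda>z. f (with_coord n i b z))"
proof (rule mono_onI)
  fix z z' :: "nat \<Rightarrow> bool" assume "z \<le> z'"
  then have "list_all2 (\<le>) (with_coord n i b z) (with_coord n i b z')"
    by (auto simp: with_coord_def list_all2_conv_all_nth le_fun_def)
  then show "f (with_coord n i b z) \<le> f (with_coord n i b z')"
    using assms unfolding monotone_fun_def by (simp add: with_coord_def)
qed

lemma neg_regression_reset_diff_le:
  fixes f :: "bool list \<Rightarrow> real"
  assumes sup: "set_pmf p \<subseteq> {xs. length xs = n}" and nr: "neg_regression n p"
    and lip: "lipschitz1 n f" and i: "i < n"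
    and ne1: "set_pmf p \<inter> {xs. xs ! i} \<noteq> {}" and ne0: "set_pmf p \<inter> {xs. \<not> xs ! i} \<noteq> {}"
    and S: "measure_pmf.expectation (cond_pmf p {xs. \<not> xs ! i}) (\<lambda>xs. ones {..<n} ((!) xs))
          \<le> measure_pmf.expectation (cond_pmf p {xs. xs ! i}) (\<lambda>xs. ones {..<n} ((!) xs))"
    and s: "\<bar>s\<bar> \<le> 1"
  shows "s * (measure_pmf.expectation (cond_pmf p {xs. xs ! i}) (\<lambda>xs. f (xs[i := False]))
            - measure_pmf.expectation (cond_pmf p {xs. \<not> xs ! i}) (\<lambda>xs. f (xs[i := False]))) \<le> 1"
proof -
  let ?I = "{..<n} - {i}"
  define G where "G = (\<lambda>z. s * f (with_coord n i False z) + ones ?I z)"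
  have fin: "finite (set_pmf p)" using sup by (rule finite_set_pmf_bool_lists)
  have cond: "measure_pmf.expectation (cond_pmf p {xs. xs ! i = b}) (\<lambda>xs. G (proj ?I xs))
      = s * measure_pmf.expectation (cond_pmf p {xs. xs ! i = b}) (\<lambda>xs. f (xs[i := False]))
        + measure_pmf.expectation (cond_pmf p {xs. xs ! i = b}) (\<lambda>xs. ones {..<n} ((!) xs))
        - of_bool b"
    if ne: "set_pmf p \<inter> {xs. xs ! i = b} \<noteq> {}" for b
  proof -
    have "measure_pmf.expectation (cond_pmf p {xs. xs ! i = b}) (\<lambda>xs. G (proj ?I xs))
        = measure_pmf.expectation (cond_pmf p {xs. xs ! i = b})
            (\<lambda>xs. s * f (xs[i := False]) + ones {..<n} ((!) xs) - of_bool b)"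
    proof (rule expectation_cong_pmf)
      fix xs assume "xs \<in> set_pmf (cond_pmf p {xs. xs ! i = b})"
      then have "xs \<in> set_pmf p" and b: "xs ! i = b"
        using set_cond_pmf[OF ne] by blast+
      then have "length xs = n" using sup by blast
      with i b show "G (proj ?I xs) = s * f (xs[i := False]) + ones {..<n} ((!) xs) - of_bool b"
        by (simp add: G_def with_coord_proj ones_proj)
    qed
    then show ?thesis
      using fin ne by (simp add: integrable_measure_pmf_finite)
  qed
  have "measure_pmf.expectation (cond_pmf p {xs. xs ! i}) (\<lambda>xs. G (proj ?I xs))
      \<le> measure_pmf.expectation (cond_pmf p {xs. \<not> xs ! i}) (\<lambda>xs. G (proj ?I xs))"
    unfolding G_def
    by (rule neg_regression_cond_coord_le[OF nr i ne1 ne0 mono_on_lipschitz1_plus_ones[OF lip i s]])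
  then show ?thesis
    using cond[of True] cond[of False] ne1 ne0 S by (simp add: algebra_simps)
qed

lemma neg_regression_reset_mono:
  fixes f :: "bool list \<Rightarrow> real"
  assumes sup: "set_pmf p \<subseteq> {xs. length xs = n}" and nr: "neg_regression n p"
    and mono: "monotone_fun n f" and i: "i < n"
    and ne1: "set_pmf p \<inter> {xs. xs ! i} \<noteq> {}" and ne0: "set_pmf p \<inter> {xs. \<not> xs ! i} \<noteq> {}"
  shows "measure_pmf.expectation (cond_pmf p {xs. xs ! i}) (\<lambda>xs. f (xs[i := False]))
       \<le> measure_pmf.expectation (cond_pmf p {xs. \<not> xs ! i}) (\<lambda>xs. f (xs[i := False]))"
proof -
  let ?I = "{..<n} - {i}"
  have reset: "measure_pmf.expectation q (\<lambda>xs. f (with_coord n i False (proj ?I xs)))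
      = measure_pmf.expectation q (\<lambda>xs. f (xs[i := False]))" if "set_pmf q \<subseteq> set_pmf p" for q
  proof (rule expectation_cong_pmf)
    fix xs assume "xs \<in> set_pmf q"
    then have "length xs = n" using that sup by blast
    then show "f (with_coord n i False (proj ?I xs)) = f (xs[i := False])"
      by (simp add: with_coord_proj)
  qed
  have "set_pmf (cond_pmf p {xs. xs ! i}) \<subseteq> set_pmf p"
    "set_pmf (cond_pmf p {xs. \<not> xs ! i}) \<subseteq> set_pmf p"
    using ne1 ne0 by auto
  then show ?thesis
    using neg_regression_cond_coord_le[OF nr i ne1 ne0
        mono_on_monotone_fun_with_coord[OF mono, where i = i and b = False]]
    by (simp add: reset)
qed

definition nonconst_coords :: "nat \<Rightarrow> bool list pmf \<Rightarrow> nat set" where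
  "nonconst_coords n p = {i. i < n \<and> (\<exists>x\<in>set_pmf p. \<exists>y\<in>set_pmf p. x ! i \<noteq> y ! i)}"

lemma nonconst_coords_iff:
  "i \<in> nonconst_coords n p \<longleftrightarrow>
     i < n \<and> set_pmf p \<inter> {xs. xs ! i} \<noteq> {} \<and> set_pmf p \<inter> {xs. \<not> xs ! i} \<noteq> {}"
  unfolding nonconst_coords_def by blast

lemma nonconst_coords_subset: "nonconst_coords n p \<subseteq> {..<n}"
  by (auto simp: nonconst_coords_def)

lemma nonconst_coords_empty_return_pmf:
  assumes sup: "set_pmf p \<subseteq> {xs. length xs = n}" and "nonconst_coords n p = {}"
  obtains x where "p = return_pmf x"
proof -
  obtain x where x: "x \<in> set_pmf p" using set_pmf_not_empty[of p] by blast
  have "y = x" if "y \<in> set_pmf p" for y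
  proof (rule nth_equalityI)
    show "length y = length x" using sup that x by auto
    show "y ! j = x ! j" if "j < length y" for j
      using that sup \<open>y \<in> set_pmf p\<close> x \<open>nonconst_coords n p = {}\<close>
      unfolding nonconst_coords_def by blast
  qed
  then have "set_pmf p \<subseteq> {x}" by blast
  then show ?thesis using that by (simp add: set_pmf_subset_singleton)
qed

definition splitting_coord :: "nat \<Rightarrow> bool list pmf \<Rightarrow> nat \<Rightarrow> bool" where
  "splitting_coord n p i \<longleftrightarrow> i \<in> nonconst_coords n p \<and>
     measure_pmf.expectation (cond_pmf p {xs. \<not> xs ! i}) (\<lambda>xs. ones {..<n} ((!) xs))
       \<le> measure_pmf.expectation (cond_pmf p {xs. xs ! i}) (\<lambda>xs. ones {..<n} ((!) xs))"

lemma
  fixes f :: "bool list \<Rightarrow> real"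
  assumes sup: "set_pmf p \<subseteq> {xs. length xs = n}" and i: "i < n"
    and ne1: "set_pmf p \<inter> {xs. xs ! i} \<noteq> {}"
  shows cond_mean_reset_abs_diff_le:
      "lipschitz1 n f \<Longrightarrow>
        \<bar>measure_pmf.expectation (cond_pmf p {xs. xs ! i}) f
          - measure_pmf.expectation (cond_pmf p {xs. xs ! i}) (\<lambda>xs. f (xs[i := False]))\<bar> \<le> 1"
    and cond_mean_reset_le:
      "monotone_fun n f \<Longrightarrow>
        measure_pmf.expectation (cond_pmf p {xs. xs ! i}) (\<lambda>xs. f (xs[i := False]))
          \<le> measure_pmf.expectation (cond_pmf p {xs. xs ! i}) f"
proof -
  have fin: "finite (set_pmf (cond_pmf p {xs. xs ! i}))"
    using finite_set_pmf_bool_lists[OF sup] ne1 by simp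
  have len: "length xs = n" if "xs \<in> set_pmf (cond_pmf p {xs. xs ! i})" for xs
    using that set_cond_pmf[OF ne1] sup by blast
  show "\<bar>measure_pmf.expectation (cond_pmf p {xs. xs ! i}) f
      - measure_pmf.expectation (cond_pmf p {xs. xs ! i}) (\<lambda>xs. f (xs[i := False]))\<bar> \<le> 1"
    if lip: "lipschitz1 n f"
    using lip i len unfolding lipschitz1_def by (intro abs_expectation_diff_le[OF fin]) blast
  show "measure_pmf.expectation (cond_pmf p {xs. xs ! i}) (\<lambda>xs. f (xs[i := False]))
      \<le> measure_pmf.expectation (cond_pmf p {xs. xs ! i}) f" if mono: "monotone_fun n f"
  proof (rule integral_mono_AE)
    show "integrable (cond_pmf p {xs. xs ! i}) (\<lambda>xs. f (xs[i := False]))"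
      "integrable (cond_pmf p {xs. xs ! i}) f"
      using fin by (simp_all add: integrable_measure_pmf_finite)
    show "AE xs in cond_pmf p {xs. xs ! i}. f (xs[i := False]) \<le> f xs"
      unfolding AE_measure_pmf_iff
    proof
      fix xs assume "xs \<in> set_pmf (cond_pmf p {xs. xs ! i})"
      then have "length xs = n" by (rule len)
      moreover have "list_all2 (\<le>) (xs[i := False]) xs"
        using i \<open>length xs = n\<close> by (auto simp: list_all2_conv_all_nth nth_list_update)
      ultimately show "f (xs[i := False]) \<le> f xs"
        using mono unfolding monotone_fun_def by simp
    qed
  qed
qed

lemma
  fixes f :: "bool list \<Rightarrow> real"
  assumes sup: "set_pmf p \<subseteq> {xs. length xs = n}" and nr: "neg_regression n p"
    and lip: "lipschitz1 n f" and split: "splitting_coord n p i"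
  defines "E1 \<equiv> measure_pmf.expectation (cond_pmf p {xs. xs ! i})"
    and "E0 \<equiv> measure_pmf.expectation (cond_pmf p {xs. \<not> xs ! i})"
  shows splitting_coord_cond_mean_gap: "\<bar>E1 f - E0 f\<bar> \<le> 2"
    and splitting_coord_cond_mean_gap_monotone: "monotone_fun n f \<Longrightarrow> \<bar>E1 f - E0 f\<bar> \<le> 1"
proof -
  define h where "h = (\<lambda>xs. f (xs[i := False]))"
  have i: "i < n" and ne1: "set_pmf p \<inter> {xs. xs ! i} \<noteq> {}"
    and ne0: "set_pmf p \<inter> {xs. \<not> xs ! i} \<noteq> {}"
    and S: "E0 (\<lambda>xs. ones {..<n} ((!) xs)) \<le> E1 (\<lambda>xs. ones {..<n} ((!) xs))"
    using split by (auto simp: splitting_coord_def nonconst_coords_iff E0_def E1_def)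
  have h_gap: "\<bar>E1 h - E0 h\<bar> \<le> 1"
    using neg_regression_reset_diff_le[OF sup nr lip i ne1 ne0, of 1]
      neg_regression_reset_diff_le[OF sup nr lip i ne1 ne0, of "-1"] S
    by (simp add: E0_def E1_def h_def abs_le_iff)
  have h0: "E0 f = E0 h"
    unfolding E0_def h_def
  proof (rule expectation_cong_pmf)
    fix xs assume "xs \<in> set_pmf (cond_pmf p {xs. \<not> xs ! i})"
    then have "\<not> xs ! i" using ne0 by auto
    then show "f xs = f (xs[i := False])" by (metis list_update_id)
  qed
  have h1: "\<bar>E1 f - E1 h\<bar> \<le> 1"
    unfolding E1_def h_def by (rule cond_mean_reset_abs_diff_le[OF sup i ne1 lip])
  show "\<bar>E1 f - E0 f\<bar> \<le> 2"
    using h_gap h0 h1 by linarith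
  assume mono: "monotone_fun n f"
  have "E1 h \<le> E1 f"
    unfolding E1_def h_def by (rule cond_mean_reset_le[OF sup i ne1 mono])
  moreover have "E1 h \<le> E0 h"
    unfolding E1_def E0_def h_def by (rule neg_regression_reset_mono[OF sup nr mono i ne1 ne0])
  ultimately show "\<bar>E1 f - E0 f\<bar> \<le> 1"
    using h_gap h0 h1 by linarith
qed

section \<open>Existence of a splitting coordinate\<close>

definition coord_cov :: "nat \<Rightarrow> bool list pmf \<Rightarrow> nat \<Rightarrow> real" where
  "coord_cov n p i =
     measure_pmf.expectation p (\<lambda>xs. indicator {xs. xs ! i} xs * ones {..<n} ((!) xs))
     - measure_pmf.prob p {xs. xs ! i} * measure_pmf.expectation p (\<lambda>xs. ones {..<n} ((!) xs))"

lemma sum_coord_cov: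
  assumes fin: "finite (set_pmf p)"
  shows "(\<Sum>i<n. coord_cov n p i) = measure_pmf.variance p (\<lambda>xs. ones {..<n} ((!) xs))"
proof -
  define S where "S = (\<lambda>xs :: bool list. ones {..<n} ((!) xs))"
  have S_sum: "S xs = (\<Sum>i<n. indicator {xs. xs ! i} xs)" for xs
    by (simp add: S_def ones_def indicator_def of_bool_def)
  have "(\<Sum>i<n. measure_pmf.expectation p (\<lambda>xs. indicator {xs. xs ! i} xs * S xs))
      = measure_pmf.expectation p (\<lambda>xs. \<Sum>i<n. indicator {xs. xs ! i} xs * S xs)"
    using fin by (intro Bochner_Integration.integral_sum[symmetric])
      (simp add: integrable_measure_pmf_finite)
  also have "\<dots> = measure_pmf.expectation p (\<lambda>xs. (S xs)\<^sup>2)"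
    by (simp only: S_sum[symmetric] power2_eq_square flip: sum_distrib_right)
  finally have square: "(\<Sum>i<n. measure_pmf.expectation p (\<lambda>xs. indicator {xs. xs ! i} xs * S xs))
      = measure_pmf.expectation p (\<lambda>xs. (S xs)\<^sup>2)" .
  have "(\<Sum>i<n. measure_pmf.prob p {xs. xs ! i})
      = measure_pmf.expectation p (\<lambda>xs. \<Sum>i<n. indicator {xs. xs ! i} xs)"
    using fin by (simp add: integrable_measure_pmf_finite Bochner_Integration.integral_sum
        del: sum_of_bool_eq)
  then have mean: "(\<Sum>i<n. measure_pmf.prob p {xs. xs ! i}) = measure_pmf.expectation p S"
    unfolding S_sum[abs_def] .
  have "(\<Sum>i<n. coord_cov n p i)
      = (\<Sum>i<n. measure_pmf.expectation p (\<lambda>xs. indicator {xs. xs ! i} xs * S xs))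
        - (\<Sum>i<n. measure_pmf.prob p {xs. xs ! i}) * measure_pmf.expectation p S"
    by (simp add: coord_cov_def S_def sum_subtractf sum_distrib_right)
  also have "\<dots> = measure_pmf.expectation p (\<lambda>xs. (S xs)\<^sup>2) - (measure_pmf.expectation p S)\<^sup>2"
    unfolding square mean by (simp add: power2_eq_square)
  also have "\<dots> = measure_pmf.variance p S"
    using fin by (simp add: measure_pmf.variance_eq integrable_measure_pmf_finite)
  finally show ?thesis unfolding S_def .
qed

lemma coord_cov_const:
  assumes "i < n" "i \<notin> nonconst_coords n p"
  shows "coord_cov n p i = 0"
proof -
  obtain x0 where x0: "x0 \<in> set_pmf p" using set_pmf_not_empty[of p] by blast
  define c :: real where "c = indicator {xs. xs ! i} x0"
  have c: "indicator {xs. xs ! i} x = c" if "x \<in> set_pmf p" for x :: "bool list"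
  proof -
    have "x ! i = x0 ! i"
      using assms that x0 unfolding nonconst_coords_def by blast
    then show ?thesis by (simp add: c_def indicator_def)
  qed
  have "measure_pmf.expectation p (\<lambda>xs. indicator {xs. xs ! i} xs * ones {..<n} ((!) xs))
      = measure_pmf.expectation p (\<lambda>xs. c * ones {..<n} ((!) xs))"
    by (rule expectation_cong_pmf) (simp add: c)
  moreover have "measure_pmf.expectation p (indicator {xs. xs ! i}) = measure_pmf.expectation p (\<lambda>_. c)"
    by (rule expectation_cong_pmf) (simp add: c)
  ultimately show ?thesis by (simp add: coord_cov_def)
qed

text \<open>Otherwise every \<open>coord_cov n p i = Cov(X_i, S)\<close>, with \<open>S\<close> the number of ones, would be
  \<open>\<le> 0\<close> and some would be \<open>< 0\<close>, contradicting \<open>Var S \<ge> 0\<close>.\<close>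
lemma exists_splitting_coord:
  assumes sup: "set_pmf p \<subseteq> {xs. length xs = n}" and nc: "nonconst_coords n p \<noteq> {}"
  shows "\<exists>i. splitting_coord n p i"
proof (rule ccontr)
  assume none: "\<nexists>i. splitting_coord n p i"
  have fin: "finite (set_pmf p)" using sup by (rule finite_set_pmf_bool_lists)
  have neg: "coord_cov n p i < 0" if "i \<in> nonconst_coords n p" for i
  proof -
    have ne1: "set_pmf p \<inter> {xs. xs ! i} \<noteq> {}" and ne0: "set_pmf p \<inter> - {xs. xs ! i} \<noteq> {}"
      using that by (auto simp: nonconst_coords_iff)
    have "measure_pmf.expectation (cond_pmf p {xs. xs ! i}) (\<lambda>xs. ones {..<n} ((!) xs))
        < measure_pmf.expectation (cond_pmf p (- {xs. xs ! i})) (\<lambda>xs. ones {..<n} ((!) xs))"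
      using none that by (auto simp: splitting_coord_def Collect_neg_eq)
    moreover have "measure_pmf.prob p {xs. xs ! i} > 0" "measure_pmf.prob p (- {xs. xs ! i}) > 0"
      using ne1 ne0 by (auto intro: measure_pmf_posI)
    ultimately show ?thesis
      unfolding coord_cov_def covariance_indicator_cond_pmf[OF fin ne1 ne0]
      by (simp add: mult_pos_neg)
  qed
  have "(\<Sum>i<n. coord_cov n p i) < (\<Sum>i<n. 0)"
  proof (rule sum_strict_mono_ex1)
    show "\<forall>i\<in>{..<n}. coord_cov n p i \<le> 0"
      using neg coord_cov_const by (metis less_eq_real_def lessThan_iff)
    show "\<exists>i\<in>{..<n}. coord_cov n p i < 0"
      using neg nc by (auto simp: nonconst_coords_def)
  qed simp
  then show False
    using measure_pmf.variance_positive[of p "\<lambda>xs. ones {..<n} ((!) xs)"]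
    unfolding sum_coord_cov[OF fin] by simp
qed

section \<open>Concentration\<close>

lemma Hoeffdings_lemma_two_point:
  fixes q l x y :: real
  assumes "0 \<le> q" "q \<le> 1"
  shows "q * exp (l * x) + (1 - q) * exp (l * y) \<le> exp (l * (q * x + (1 - q) * y) + l\<^sup>2 * (x - y)\<^sup>2 / 8)"
proof -
  have aligned: "q * exp (l * x) + (1 - q) * exp (l * y) \<le> exp (l * (q * x + (1 - q) * y) + l\<^sup>2 * (x - y)\<^sup>2 / 8)"
    if q: "0 \<le> q" "q \<le> 1" and h: "l * (x - y) \<ge> 0" for q x y
  proof -
    define h where "h = l * (x - y)"
    have "exp h \<ge> 1" using h by (simp add: h_def)
    then have pos: "1 + q * (exp h - 1) > 0" using q by (simp add: add_pos_nonneg)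
    have "ln (1 + q * (exp h - 1)) \<le> h * q + h\<^sup>2 / 8"
      using Hoeffdings_lemma_aux[of h q] q h by (simp add: h_def)
    then have bound: "1 + q * (exp h - 1) \<le> exp (h * q + h\<^sup>2 / 8)"
      using pos by (metis exp_le_cancel_iff exp_ln)
    have "exp (l * x) = exp (l * y) * exp h"
      unfolding h_def by (simp add: algebra_simps flip: exp_add)
    then have "q * exp (l * x) + (1 - q) * exp (l * y) = exp (l * y) * (1 + q * (exp h - 1))"
      by (simp add: algebra_simps)
    also have "\<dots> \<le> exp (l * y) * exp (h * q + h\<^sup>2 / 8)"
      using bound by simp
    also have "\<dots> = exp (l * y + h * q + h\<^sup>2 / 8)"
      by (simp flip: exp_add)
    also have "l * y + h * q + h\<^sup>2 / 8 = l * (q * x + (1 - q) * y) + l\<^sup>2 * (x - y)\<^sup>2 / 8"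
      unfolding h_def by (simp add: algebra_simps power2_eq_square)
    finally show ?thesis .
  qed
  show ?thesis
  proof (cases "l * (x - y) \<ge> 0")
    case True
    with aligned assms show ?thesis by blast
  next
    case False
    then have "l * (y - x) \<ge> 0" by (simp add: algebra_simps)
    with aligned[of "1 - q" y x] assms show ?thesis
      by (simp add: algebra_simps power2_commute)
  qed
qed

lemma mgf_bound_cond_pmf_split:
  fixes f :: "'a \<Rightarrow> real"
  assumes fin: "finite (set_pmf p)"
    and ne: "set_pmf p \<inter> A \<noteq> {}" "set_pmf p \<inter> - A \<noteq> {}"
    and mgf: "\<And>B. B \<in> {A, - A} \<Longrightarrow> measure_pmf.expectation (cond_pmf p B) (\<lambda>x. exp (l * f x))
               \<le> exp (l * measure_pmf.expectation (cond_pmf p B) f + K)"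
    and gap: "\<bar>measure_pmf.expectation (cond_pmf p A) f - measure_pmf.expectation (cond_pmf p (- A)) f\<bar> \<le> c"
  shows "measure_pmf.expectation p (\<lambda>x. exp (l * f x))
           \<le> exp (l * measure_pmf.expectation p f + K + l\<^sup>2 * c\<^sup>2 / 8)"
proof -
  define q where "q = measure_pmf.prob p A"
  define a1 where "a1 = measure_pmf.expectation (cond_pmf p A) f"
  define a0 where "a0 = measure_pmf.expectation (cond_pmf p (- A)) f"
  have q: "0 \<le> q" "q \<le> 1" "measure_pmf.prob p (- A) = 1 - q"
    by (simp_all add: q_def measure_pmf_prob_Compl)
  have "\<bar>a1 - a0\<bar>\<^sup>2 \<le> c\<^sup>2"
    using gap by (intro power_mono) (auto simp: a1_def a0_def)
  then have gap2: "(a1 - a0)\<^sup>2 \<le> c\<^sup>2"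
    by simp
  have "measure_pmf.expectation p (\<lambda>x. exp (l * f x))
      = q * measure_pmf.expectation (cond_pmf p A) (\<lambda>x. exp (l * f x))
        + (1 - q) * measure_pmf.expectation (cond_pmf p (- A)) (\<lambda>x. exp (l * f x))"
    using expectation_split_cond_pmf[OF fin ne] q by (simp add: q_def)
  also have "\<dots> \<le> q * exp (l * a1 + K) + (1 - q) * exp (l * a0 + K)"
    using mgf[of A] mgf[of "- A"] q unfolding a1_def a0_def
    by (intro add_mono mult_left_mono) auto
  also have "\<dots> = exp K * (q * exp (l * a1) + (1 - q) * exp (l * a0))"
    by (simp add: exp_add algebra_simps)
  also have "\<dots> \<le> exp K * exp (l * (q * a1 + (1 - q) * a0) + l\<^sup>2 * (a1 - a0)\<^sup>2 / 8)"
    using Hoeffdings_lemma_two_point[OF q(1,2)] by simp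
  also have "\<dots> \<le> exp K * exp (l * measure_pmf.expectation p f + l\<^sup>2 * c\<^sup>2 / 8)"
    using expectation_split_cond_pmf[OF fin ne, of f] q gap2
    by (simp add: a1_def a0_def q_def mult_left_mono)
  also have "\<dots> = exp (l * measure_pmf.expectation p f + K + l\<^sup>2 * c\<^sup>2 / 8)"
    by (simp add: algebra_simps flip: exp_add)
  finally show ?thesis .
qed

lemma Chernoff_bounds_pmf:
  fixes f :: "'a \<Rightarrow> real"
  assumes fin: "finite (set_pmf p)" and V: "V \<ge> 0" and t: "t > 0"
    and mgf: "\<And>l. measure_pmf.expectation p (\<lambda>x. exp (l * f x)) \<le> exp (l * \<mu> + l\<^sup>2 * V)"
  shows "measure_pmf.prob p {x. f x \<ge> \<mu> + t} \<le> exp (- (t\<^sup>2) / (4 * V))"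
    and "measure_pmf.prob p {x. f x \<le> \<mu> - t} \<le> exp (- (t\<^sup>2) / (4 * V))"
proof -
  have "measure_pmf.prob p {x. f x \<ge> \<mu> + t} \<le> exp (- (t\<^sup>2) / (4 * V))
      \<and> measure_pmf.prob p {x. f x \<le> \<mu> - t} \<le> exp (- (t\<^sup>2) / (4 * V))"
  proof (cases "V = 0")
    case True
    then show ?thesis by simp
  next
    case False
    define s where "s = t / (2 * V)"
    have s: "s > 0" using V False t by (simp add: s_def)
    have exponent: "- s * t + s\<^sup>2 * V = - (t\<^sup>2) / (4 * V)"
      using False by (simp add: s_def field_simps power2_eq_square)
    have integrable: "set_integrable p UNIV (\<lambda>x. exp (r * f x))" for r
      using fin by (simp add: set_integrable_def integrable_measure_pmf_finite)
    have "measure_pmf.prob p {x. f x \<ge> \<mu> + t}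
        \<le> exp (- s * (\<mu> + t)) * measure_pmf.expectation p (\<lambda>x. exp (s * f x))"
      using measure_pmf.Chernoff_ineq_ge[OF s integrable, of "\<mu> + t"]
      by (simp add: set_lebesgue_integral_def)
    also have "\<dots> \<le> exp (- s * (\<mu> + t)) * exp (s * \<mu> + s\<^sup>2 * V)"
      using mgf by (intro mult_left_mono) auto
    also have "\<dots> = exp (- (t\<^sup>2) / (4 * V))"
      unfolding exponent[symmetric] by (simp add: algebra_simps flip: exp_add)
    moreover have "measure_pmf.prob p {x. f x \<le> \<mu> - t}
        \<le> exp (s * (\<mu> - t)) * measure_pmf.expectation p (\<lambda>x. exp (- s * f x))"
      using measure_pmf.Chernoff_ineq_le[OF s integrable, of "\<mu> - t"]
      by (simp add: set_lebesgue_integral_def)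
    moreover have "exp (s * (\<mu> - t)) * measure_pmf.expectation p (\<lambda>x. exp (- s * f x))
        \<le> exp (s * (\<mu> - t)) * exp (- s * \<mu> + s\<^sup>2 * V)"
      using mgf[of "- s"] by (intro mult_left_mono) auto
    moreover have "exp (s * (\<mu> - t)) * exp (- s * \<mu> + s\<^sup>2 * V) = exp (- (t\<^sup>2) / (4 * V))"
      unfolding exponent[symmetric] by (simp add: algebra_simps flip: exp_add)
    ultimately show ?thesis by linarith
  qed
  then show "measure_pmf.prob p {x. f x \<ge> \<mu> + t} \<le> exp (- (t\<^sup>2) / (4 * V))"
    and "measure_pmf.prob p {x. f x \<le> \<mu> - t} \<le> exp (- (t\<^sup>2) / (4 * V))"
    by auto
qed

lemma cond_pmf_coord_preserves:
  assumes sup: "set_pmf p \<subseteq> {xs. length xs = n}" and nr: "neg_regression n p"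
    and i: "i \<in> nonconst_coords n p" and ne: "set_pmf p \<inter> {xs. xs ! i = b} \<noteq> {}"
  shows "set_pmf (cond_pmf p {xs. xs ! i = b}) \<subseteq> {xs. length xs = n}"
    and "neg_regression n (cond_pmf p {xs. xs ! i = b})"
    and "card (nonconst_coords n (cond_pmf p {xs. xs ! i = b})) < card (nonconst_coords n p)"
proof -
  show "set_pmf (cond_pmf p {xs. xs ! i = b}) \<subseteq> {xs. length xs = n}"
    using sup ne by auto
  show "neg_regression n (cond_pmf p {xs. xs ! i = b})"
    using neg_regression_cond_pmf[OF sup nr _ ne] i by (simp add: nonconst_coords_iff)
  have "nonconst_coords n (cond_pmf p {xs. xs ! i = b}) \<subseteq> nonconst_coords n p - {i}"
    using ne by (auto simp: nonconst_coords_def)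
  then have "nonconst_coords n (cond_pmf p {xs. xs ! i = b}) \<subset> nonconst_coords n p"
    using i by blast
  then show "card (nonconst_coords n (cond_pmf p {xs. xs ! i = b})) < card (nonconst_coords n p)"
    by (rule psubset_card_mono[OF finite_subset[OF nonconst_coords_subset finite_lessThan]])
qed

lemma mgf_bound:
  fixes f :: "bool list \<Rightarrow> real" and c l :: real
  assumes gap: "\<And>q i. set_pmf q \<subseteq> {xs. length xs = n} \<Longrightarrow> neg_regression n q \<Longrightarrow>
      splitting_coord n q i \<Longrightarrow>
      \<bar>measure_pmf.expectation (cond_pmf q {xs. xs ! i}) f
        - measure_pmf.expectation (cond_pmf q {xs. \<not> xs ! i}) f\<bar> \<le> c"
    and "set_pmf p \<subseteq> {xs. length xs = n}" and "neg_regression n p"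
    and "card (nonconst_coords n p) \<le> k"
  shows "measure_pmf.expectation p (\<lambda>x. exp (l * f x))
    \<le> exp (l * measure_pmf.expectation p f + l\<^sup>2 * (c\<^sup>2 * real k / 8))"
  using assms(2-4)
proof (induction k arbitrary: p)
  case 0
  then have "nonconst_coords n p = {}"
    using finite_subset[OF nonconst_coords_subset finite_lessThan] by simp
  then obtain x where "p = return_pmf x"
    using nonconst_coords_empty_return_pmf[OF "0.prems"(1)] by blast
  then show ?case by simp
next
  case (Suc k)
  show ?case
  proof (cases "nonconst_coords n p = {}")
    case True
    then obtain x where "p = return_pmf x"
      using nonconst_coords_empty_return_pmf[OF Suc.prems(1)] by blast
    then show ?thesis by simp
  next
    case False
    then obtain i where i: "splitting_coord n p i"
      using exists_splitting_coord[OF Suc.prems(1)] by blast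
    then have i_nc: "i \<in> nonconst_coords n p" by (simp add: splitting_coord_def)
    define A where "A = {xs :: bool list. xs ! i}"
    have ne: "set_pmf p \<inter> A \<noteq> {}" "set_pmf p \<inter> - A \<noteq> {}"
      using i_nc by (auto simp: nonconst_coords_iff A_def)
    have "measure_pmf.expectation (cond_pmf p B) (\<lambda>x. exp (l * f x))
        \<le> exp (l * measure_pmf.expectation (cond_pmf p B) f + l\<^sup>2 * (c\<^sup>2 * real k / 8))"
      if "B \<in> {A, - A}" for B
    proof -
      have "B = {xs. xs ! i = True} \<or> B = {xs. xs ! i = False}"
        using that unfolding A_def by auto
      then obtain b where B: "B = {xs. xs ! i = b}" by blast
      have "set_pmf p \<inter> {xs. xs ! i = b} \<noteq> {}" using that ne unfolding B by blast
      note cond = cond_pmf_coord_preserves[OF Suc.prems(1,2) i_nc this]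
      have "card (nonconst_coords n (cond_pmf p {xs. xs ! i = b})) \<le> k"
        using cond(3) Suc.prems(3) by linarith
      with cond(1,2) show ?thesis
        unfolding B by (rule Suc.IH)
    qed
    moreover have "\<bar>measure_pmf.expectation (cond_pmf p A) f
        - measure_pmf.expectation (cond_pmf p (- A)) f\<bar> \<le> c"
      using gap[OF Suc.prems(1,2) i] by (simp add: A_def Collect_neg_eq)
    ultimately have "measure_pmf.expectation p (\<lambda>x. exp (l * f x))
        \<le> exp (l * measure_pmf.expectation p f + l\<^sup>2 * (c\<^sup>2 * real k / 8) + l\<^sup>2 * c\<^sup>2 / 8)"
      by (rule mgf_bound_cond_pmf_split[OF finite_set_pmf_bool_lists[OF Suc.prems(1)] ne])
    then show ?thesis
      by (simp add: algebra_simps add_divide_distrib)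
  qed
qed

theorem mainTheorem1:
  fixes n :: nat and p :: "bool list pmf" and f :: "bool list \<Rightarrow> real"
  assumes "set_pmf p \<subseteq> {xs. length xs = n}"
    and "neg_regression n p"
    and "lipschitz1 n f"
  defines "\<mu> \<equiv> measure_pmf.expectation p f"
  shows "(\<forall>t::real. t > 0 \<longrightarrow>
              measure_pmf.prob p {xs. f xs \<ge> \<mu> + t} \<le> exp (- (t\<^sup>2) / (2 * real n))
            \<and> measure_pmf.prob p {xs. f xs \<le> \<mu> - t} \<le> exp (- (t\<^sup>2) / (2 * real n)))
       \<and> (monotone_fun n f \<longrightarrow>
           (\<forall>t::real. t > 0 \<longrightarrow>
              measure_pmf.prob p {xs. f xs \<ge> \<mu> + t} \<le> exp (- 2 * t\<^sup>2 / real n)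
            \<and> measure_pmf.prob p {xs. f xs \<le> \<mu> - t} \<le> exp (- 2 * t\<^sup>2 / real n)))"
proof -
  note sup = assms(1) and nr = assms(2) and lip = assms(3)
  have fin: "finite (set_pmf p)" using sup by (rule finite_set_pmf_bool_lists)
  have card: "card (nonconst_coords n p) \<le> n"
    using card_mono[OF finite_lessThan nonconst_coords_subset] by simp
  have "measure_pmf.prob p {xs. f xs \<ge> \<mu> + t} \<le> exp (- (t\<^sup>2) / (2 * real n))
      \<and> measure_pmf.prob p {xs. f xs \<le> \<mu> - t} \<le> exp (- (t\<^sup>2) / (2 * real n))" if "t > 0" for t
    using Chernoff_bounds_pmf[OF fin _ that
        mgf_bound[OF splitting_coord_cond_mean_gap[OF _ _ lip] sup nr card]]
    unfolding \<mu>_def by (simp add: power2_eq_square mult.commute)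
  moreover have "measure_pmf.prob p {xs. f xs \<ge> \<mu> + t} \<le> exp (- 2 * t\<^sup>2 / real n)
      \<and> measure_pmf.prob p {xs. f xs \<le> \<mu> - t} \<le> exp (- 2 * t\<^sup>2 / real n)"
    if "monotone_fun n f" "t > 0" for t
    using Chernoff_bounds_pmf[OF fin _ that(2)
        mgf_bound[OF splitting_coord_cond_mean_gap_monotone[OF _ _ lip _ that(1)] sup nr card]]
    unfolding \<mu>_def by (simp add: divide_divide_eq_right mult.commute)
  ultimately show ?thesis by blast
qed

end
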